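(* Let $\mathcal P$ be a collection of permutations such that $\mathcal P_n=\mathcal P\cap\mathcal S_n$ is nonempty for infinitely many $n$. Suppose each $\mathcal P_n$ is a union of conjugacy classes of $\mathcal S_n$, and that the average number of fixed points of the elements of $\mathcal P_n$ is $o(n)$ as $n\to\infty$ (over those $n$ with $\mathcal P_n\neq\emptyset$). Then $\mathcal P$ is quasirandom, i.e. for each $k\ge1$, \[\lim_{n\to\infty}\max_{\tau}\left|\tilde p(n,\tau)-\frac1{k!}\right|=0,\] where the limit is over those $n$ with $\mathcal P_n\ne\emptyset$ and the maximum is over all sequences $\tau$ of $k$ distinct elements of $[n]$.
   Context: $\mathcal S_n$ is the set of all permutations of $[n]=\{1,\dots,n\}$. A permutation $\phi\in\mathcal S_n$ has a sequence $\tau=(\tau_1,\dots,\tau_k)$ of distinct elements of $[n]$ as a subsequence if $\tau$ is a subsequence of the word $\phi(1)\phi(2)\cdots\phi(n)$. For $\mathcal P_n\ne\emptyset$, $h(n,\tau)$ is the number of elements of $\mathcal P_n$ having $\tau$ as a subsequence and $\tilde p(n,\tau)=h(n,\tau)/|\mathcal P_n|$. *)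

theory Defs
  imports "HOL-Combinatorics.Permutations" "HOL-Library.Sublist" Complex_Main
begin

text \<open>Permutations of [n] = {1..n} are functions nat => nat that permute {1..n}.\<close>

definition word :: "(nat \<Rightarrow> nat) \<Rightarrow> nat \<Rightarrow> nat list" where
  "word \<phi> n = map \<phi> [1..<n+1]"

definition has_subseq :: "nat \<Rightarrow> (nat \<Rightarrow> nat) \<Rightarrow> nat list \<Rightarrow> bool" where
  "has_subseq n \<phi> \<tau> \<longleftrightarrow> subseq \<tau> (word \<phi> n)"

definition h :: "(nat \<Rightarrow> (nat \<Rightarrow> nat) set) \<Rightarrow> nat \<Rightarrow> nat list \<Rightarrow> nat" where
  "h P n \<tau> = card {\<phi> \<in> P n. has_subseq n \<phi> \<tau>}"

definition ptilde :: "(nat \<Rightarrow> (nat \<Rightarrow> nat) set) \<Rightarrow> nat \<Rightarrow> nat list \<Rightarrow> real" where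
  "ptilde P n \<tau> = real (h P n \<tau>) / real (card (P n))"

definition num_fixed :: "nat \<Rightarrow> (nat \<Rightarrow> nat) \<Rightarrow> nat" where
  "num_fixed n \<phi> = card {i \<in> {1..n}. \<phi> i = i}"

definition avg_fixed :: "(nat \<Rightarrow> (nat \<Rightarrow> nat) set) \<Rightarrow> nat \<Rightarrow> real" where
  "avg_fixed P n = (\<Sum>\<phi>\<in>P n. real (num_fixed n \<phi>)) / real (card (P n))"

end

(*
  Write pos \<psi> = map (inv \<psi>) \<tau> for the positions at which the letters of \<tau> occur in the
  word \<psi>(1) ... \<psi>(n); then \<psi> contains \<tau> iff pos \<psi> is increasing.  Call \<psi> good if no
  position is itself a letter of \<tau>.  Conjugating a good \<psi> by a permutation \<sigma> that fixes the
  letters of \<tau> and moves only positions replaces pos \<psi> by map \<sigma> (pos \<psi>); since P n is closed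
  under conjugation, every ordering of a given set of positions occurs equally often, so exactly
  a 1/k! fraction of the good permutations contains \<tau>.  A bad \<psi> has \<psi> a = b for letters a, b
  of \<tau>.  Conjugation invariance makes the number of \<psi> with \<psi> a = a equal to the total number
  of fixed points divided by n, and the number with \<psi> a = b (a \<noteq> b) at most |P n| / (n - 1).
  So the bad fraction is at most k\<^sup>2 (avg_fixed P n / n + 1 / (n - 1)), which tends to 0.
*)

theory Submission
  imports Defs "HOL-Combinatorics.Multiset_Permutations"
begin

lemma sorted_wrt_subseq: "subseq xs ys \<Longrightarrow> sorted_wrt R ys \<Longrightarrow> sorted_wrt R xs"
  by (induction rule: list_emb.induct) (auto dest: list_emb_set)

lemma subseq_upt_iff:
  "subseq xs [a..<b] \<longleftrightarrow> sorted_wrt (<) xs \<and> set xs \<subseteq> {a..<b}"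
proof
  assume subseq: "subseq xs [a..<b]"
  have "set xs \<subseteq> set [a..<b]"
    using list_emb_set[OF subseq] by blast
  then show "sorted_wrt (<) xs \<and> set xs \<subseteq> {a..<b}"
    using sorted_wrt_subseq[OF subseq sorted_wrt_upt] by simp
next
  assume "sorted_wrt (<) xs \<and> set xs \<subseteq> {a..<b}"
  then show "subseq xs [a..<b]"
    using sorted_subset_imp_subseq[of xs "[a..<b]"] sorted_upt[of a b] by simp
qed

lemma has_subseq_iff_sorted_positions:
  assumes "\<psi> permutes {1..n}" "set \<tau> \<subseteq> {1..n}"
  shows "has_subseq n \<psi> \<tau> \<longleftrightarrow> sorted_wrt (<) (map (inv \<psi>) \<tau>)"
proof -
  have "inv \<psi> ` set \<tau> \<subseteq> inv \<psi> ` {1..n}"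
    by (rule image_mono[OF assms(2)])
  then have "set (map (inv \<psi>) \<tau>) \<subseteq> {1..<n+1}"
    using permutes_image[OF permutes_inv[OF assms(1)]] by (simp add: atLeastLessThanSuc_atLeastAtMost)
  moreover have "subseq \<tau> (map \<psi> [1..<n+1]) \<longleftrightarrow> subseq (map (inv \<psi>) \<tau>) [1..<n+1]"
    using subseq_map[of \<tau> "map \<psi> [1..<n+1]" "inv \<psi>"] subseq_map[of "map (inv \<psi>) \<tau>" "[1..<n+1]" \<psi>]
      permutes_inverses[OF assms(1)] by (auto simp: comp_def)
  ultimately show ?thesis
    unfolding has_subseq_def word_def subseq_upt_iff by blast
qed

lemma obtain_permutes_map_eq:
  assumes "distinct xs" "distinct ys" "set xs = set ys"
  obtains \<sigma> where "\<sigma> permutes set xs" "map \<sigma> xs = ys"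
proof
  have len: "length ys = length xs" using assms by (metis distinct_card)
  define f where "f = (!) ys \<circ> the_inv_into {..<length xs} ((!) xs)"
  have bij_nth: "bij_betw ((!) xs) {..<length xs} (set xs)"
    using bij_betw_nth[OF assms(1)] by simp
  have "bij_betw f (set xs) (set xs)"
    unfolding f_def using bij_betw_trans[OF bij_betw_the_inv_into[OF bij_nth] bij_betw_nth[OF assms(2)]]
      len assms(3) by simp
  then show "(\<lambda>x. if x \<in> set xs then f x else x) permutes set xs"
    by (intro bij_imp_permutes) (auto cong: bij_betw_cong)
  have "f (xs ! i) = ys ! i" if "i < length xs" for i
    using the_inv_into_f_f[OF bij_betw_imp_inj_on[OF bij_nth]] that by (simp add: f_def)
  then show "map (\<lambda>x. if x \<in> set xs then f x else x) xs = ys"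
    by (intro nth_equalityI) (auto simp: len)
qed

lemma eq_sorted_list_of_set_iff:
  assumes "finite S"
  shows "xs = sorted_list_of_set S \<longleftrightarrow> set xs = S \<and> sorted_wrt (<) xs"
  using sorted_list_of_set_unique[OF assms, of xs] by (auto simp: strict_sorted_iff distinct_card)

lemma card_set_fiber_eq:
  fixes p :: "'a \<Rightarrow> 'b::linorder list"
  assumes "finite A" "finite S"
    and distinct: "\<And>x. x \<in> A \<Longrightarrow> distinct (p x)"
    and fiber_eq: "\<And>ys. ys \<in> permutations_of_set S \<Longrightarrow>
                     card {x\<in>A. p x = ys} = card {x\<in>A. p x = sorted_list_of_set S}"
  shows "card {x\<in>A. set (p x) = S} = fact (card S) * card {x\<in>A. set (p x) = S \<and> sorted_wrt (<) (p x)}"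
proof -
  have "{x\<in>A. set (p x) = S} = (\<Union>ys\<in>permutations_of_set S. {x\<in>A. p x = ys})"
    using distinct by (auto simp: permutations_of_set_def)
  then have "card {x\<in>A. set (p x) = S} = (\<Sum>ys\<in>permutations_of_set S. card {x\<in>A. p x = ys})"
    using assms(1) by (simp only:) (intro card_UN_disjoint; auto)
  also have "\<dots> = fact (card S) * card {x\<in>A. p x = sorted_list_of_set S}"
    using fiber_eq assms(2) by simp
  also have "{x\<in>A. p x = sorted_list_of_set S} = {x\<in>A. set (p x) = S \<and> sorted_wrt (<) (p x)}"
    using eq_sorted_list_of_set_iff[OF assms(2)] by simp
  finally show ?thesis .
qed

lemma card_eq_fact_mult_card_sorted:
  fixes p :: "'a \<Rightarrow> 'b::linorder list"
  assumes fin: "finite A"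
    and distinct: "\<And>x. x \<in> A \<Longrightarrow> distinct (p x)"
    and length: "\<And>x. x \<in> A \<Longrightarrow> length (p x) = k"
    and fiber_eq: "\<And>x ys. x \<in> A \<Longrightarrow> distinct ys \<Longrightarrow> set ys = set (p x) \<Longrightarrow>
                     card {y\<in>A. p y = ys} = card {y\<in>A. p y = p x}"
  shows "card A = fact k * card {x\<in>A. sorted_wrt (<) (p x)}"
proof -
  define T where "T = (\<lambda>x. set (p x)) ` A"
  have "card {x\<in>A. set (p x) = S} = fact k * card {x\<in>A. set (p x) = S \<and> sorted_wrt (<) (p x)}"
    if "S \<in> T" for S
  proof -
    obtain x0 where x0: "x0 \<in> A" "S = set (p x0)"
      using \<open>S \<in> T\<close> unfolding T_def by blast
    have "card S = k"
      using x0 distinct length by (simp add: distinct_card)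
    moreover have "card {x\<in>A. p x = ys} = card {x\<in>A. p x = sorted_list_of_set S}"
      if "ys \<in> permutations_of_set S" for ys
      using that fiber_eq[OF x0(1)] x0(2) by (simp add: permutations_of_set_def)
    ultimately show ?thesis
      using card_set_fiber_eq[OF fin _ distinct] x0(2) by simp
  qed
  then have "(\<Sum>S\<in>T. card {x\<in>A. set (p x) = S}) =
      fact k * (\<Sum>S\<in>T. card {x\<in>A. set (p x) = S \<and> sorted_wrt (<) (p x)})"
    by (simp add: sum_distrib_left)
  moreover have "(\<Sum>S\<in>T. card {x\<in>A. set (p x) = S}) = card A"
    using sum.group[of A T "\<lambda>x. set (p x)" "\<lambda>_. 1::nat"] fin by (simp add: T_def)
  moreover have "(\<Sum>S\<in>T. card {x\<in>A. set (p x) = S \<and> sorted_wrt (<) (p x)}) =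
      card {x\<in>A. sorted_wrt (<) (p x)}"
    using sum.group[of "{x\<in>A. sorted_wrt (<) (p x)}" T "\<lambda>x. set (p x)" "\<lambda>_. 1::nat"] fin
    by (simp add: T_def conj_ac image_mono)
  ultimately show ?thesis
    by simp
qed

lemma inv_conjugate:
  assumes "bij \<sigma>" "bij \<psi>"
  shows "inv (\<sigma> \<circ> \<psi> \<circ> inv \<sigma>) = \<sigma> \<circ> inv \<psi> \<circ> inv \<sigma>"
proof -
  have "inv (\<sigma> \<circ> \<psi> \<circ> inv \<sigma>) = inv (inv \<sigma>) \<circ> inv (\<sigma> \<circ> \<psi>)"
    using assms by (intro o_inv_distrib) (auto intro: bij_comp bij_imp_bij_inv)
  also have "\<dots> = \<sigma> \<circ> (inv \<psi> \<circ> inv \<sigma>)"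
    using assms by (simp add: inv_inv_eq o_inv_distrib)
  finally show ?thesis
    by (simp add: o_assoc)
qed

lemma abs_ratio_minus_inverse_le:
  fixes x y z f q :: real
  assumes "0 \<le> y" "y \<le> z" "1 \<le> f" "q = f * x + z" "0 < q"
  shows "\<bar>(x + y) / q - 1 / f\<bar> \<le> z / q"
proof -
  have "f * y - z \<le> f * z" "z - f * y \<le> f * z"
  proof -
    have "0 \<le> f * y" "f * y \<le> f * z"
      using assms(1-3) by (simp_all add: mult_left_mono)
    moreover have "z \<le> f * z"
      using mult_right_mono[OF assms(3), of z] assms(1,2) by simp
    ultimately show "f * y - z \<le> f * z" "z - f * y \<le> f * z"
      using assms(1,2) by linarith+
  qed
  then have "\<bar>f * y - z\<bar> \<le> f * z"
    by (simp add: abs_le_iff)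
  have "(x + y) / q - 1 / f = (f * y - z) / (f * q)"
    using assms(3-5) by (simp add: field_simps)
  moreover have "0 < f * q"
    using assms(3,5) by simp
  ultimately have "\<bar>(x + y) / q - 1 / f\<bar> = \<bar>f * y - z\<bar> / (f * q)"
    by (simp add: abs_divide)
  also have "\<dots> \<le> f * z / (f * q)"
    using \<open>\<bar>f * y - z\<bar> \<le> f * z\<close> \<open>0 < f * q\<close> by (intro divide_right_mono) auto
  also have "\<dots> = z / q"
    using assms(3) by simp
  finally show ?thesis .
qed

locale conj_closed_perms =
  fixes Q :: "(nat \<Rightarrow> nat) set" and n :: nat
  assumes permutes: "\<And>\<psi>. \<psi> \<in> Q \<Longrightarrow> \<psi> permutes {1..n}"
    and conj_closed: "\<And>\<psi> \<sigma>. \<psi> \<in> Q \<Longrightarrow> \<sigma> permutes {1..n} \<Longrightarrow> \<sigma> \<circ> \<psi> \<circ> inv \<sigma> \<in> Q"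
begin

lemma finite_Q: "finite Q"
  using permutes by (intro finite_subset[OF _ finite_permutations[of "{1..n}"]]) auto

lemma card_le_card_conj:
  assumes \<sigma>: "\<sigma> permutes {1..n}"
    and R: "\<And>\<psi>. \<psi> \<in> Q \<Longrightarrow> R \<psi> \<Longrightarrow> R' (\<sigma> \<circ> \<psi> \<circ> inv \<sigma>)"
  shows "card {\<psi>\<in>Q. R \<psi>} \<le> card {\<psi>\<in>Q. R' \<psi>}"
proof (rule card_inj_on_le)
  have "inv \<sigma> \<circ> (\<sigma> \<circ> \<psi> \<circ> inv \<sigma>) \<circ> \<sigma> = \<psi>" for \<psi>
    by (simp add: fun_eq_iff permutes_inverses[OF \<sigma>])
  then show "inj_on (\<lambda>\<psi>. \<sigma> \<circ> \<psi> \<circ> inv \<sigma>) {\<psi>\<in>Q. R \<psi>}"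
    by (intro inj_on_inverseI[where g = "\<lambda>\<phi>. inv \<sigma> \<circ> \<phi> \<circ> \<sigma>"])
  show "(\<lambda>\<psi>. \<sigma> \<circ> \<psi> \<circ> inv \<sigma>) ` {\<psi>\<in>Q. R \<psi>} \<subseteq> {\<psi>\<in>Q. R' \<psi>}"
    using conj_closed[OF _ \<sigma>] R by auto
  show "finite {\<psi>\<in>Q. R' \<psi>}"
    using finite_Q by simp
qed

lemma card_fixing_eq:
  assumes "a \<in> {1..n}" "b \<in> {1..n}"
  shows "card {\<psi>\<in>Q. \<psi> a = a} = card {\<psi>\<in>Q. \<psi> b = b}"
  using card_le_card_conj[OF permutes_swap_id[OF assms], of "\<lambda>\<psi>. \<psi> a = a" "\<lambda>\<psi>. \<psi> b = b"]
    card_le_card_conj[OF permutes_swap_id[OF assms], of "\<lambda>\<psi>. \<psi> b = b" "\<lambda>\<psi>. \<psi> a = a"]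
  by simp

lemma card_mapsto_eq:
  assumes "b \<in> {1..n}" "c \<in> {1..n}" "a \<noteq> b" "a \<noteq> c"
  shows "card {\<psi>\<in>Q. \<psi> a = b} = card {\<psi>\<in>Q. \<psi> a = c}"
  using card_le_card_conj[OF permutes_swap_id[OF assms(1,2)], of "\<lambda>\<psi>. \<psi> a = b" "\<lambda>\<psi>. \<psi> a = c"]
    card_le_card_conj[OF permutes_swap_id[OF assms(1,2)], of "\<lambda>\<psi>. \<psi> a = c" "\<lambda>\<psi>. \<psi> a = b"]
    assms(3,4) by simp

lemma card_fixing_mult:
  assumes "a \<in> {1..n}"
  shows "n * card {\<psi>\<in>Q. \<psi> a = a} = (\<Sum>\<psi>\<in>Q. num_fixed n \<psi>)"
proof -
  have "(\<Sum>\<psi>\<in>Q. num_fixed n \<psi>) = (\<Sum>\<psi>\<in>Q. \<Sum>b\<in>{1..n}. of_bool (\<psi> b = b))"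
    by (simp add: num_fixed_def Int_def)
  also have "\<dots> = (\<Sum>b\<in>{1..n}. \<Sum>\<psi>\<in>Q. of_bool (\<psi> b = b))"
    by (rule sum.swap)
  also have "\<dots> = (\<Sum>b\<in>{1..n}. card {\<psi>\<in>Q. \<psi> b = b})"
    using finite_Q by (simp add: Int_def)
  also have "\<dots> = (\<Sum>b\<in>{1..n}. card {\<psi>\<in>Q. \<psi> a = a})"
    using card_fixing_eq[OF assms] by simp
  finally show ?thesis
    by simp
qed

lemma card_mapsto_mult_le:
  assumes "a \<in> {1..n}" "b \<in> {1..n}" "a \<noteq> b"
  shows "(n - 1) * card {\<psi>\<in>Q. \<psi> a = b} \<le> card Q"
proof -
  have "(n - 1) * card {\<psi>\<in>Q. \<psi> a = b} = (\<Sum>c\<in>{1..n} - {a}. card {\<psi>\<in>Q. \<psi> a = b})"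
    using assms(1) by simp
  also have "\<dots> = (\<Sum>c\<in>{1..n} - {a}. card {\<psi>\<in>Q. \<psi> a = c})"
    using card_mapsto_eq[OF assms(2) _ assms(3)] by (intro sum.cong) auto
  also have "\<dots> = card (\<Union>c\<in>{1..n} - {a}. {\<psi>\<in>Q. \<psi> a = c})"
    using finite_Q by (intro card_UN_disjoint[symmetric]) auto
  also have "\<dots> \<le> card Q"
    using finite_Q by (intro card_mono) auto
  finally show ?thesis .
qed

lemma card_mapsto_bound:
  assumes "a \<in> {1..n}" "b \<in> {1..n}" "n \<ge> 2"
  shows "real (card {\<psi>\<in>Q. \<psi> a = b}) \<le>
           (\<Sum>\<psi>\<in>Q. real (num_fixed n \<psi>)) / n + card Q / (real n - 1)"
proof (cases "a = b")
  case True
  have "real n * card {\<psi>\<in>Q. \<psi> a = b} = (\<Sum>\<psi>\<in>Q. real (num_fixed n \<psi>))"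
    using arg_cong[OF card_fixing_mult[OF assms(1)], of real] True by simp
  then show ?thesis
    using assms(3) by (simp add: field_simps)
next
  case False
  have "real ((n - 1) * card {\<psi>\<in>Q. \<psi> a = b}) \<le> card Q"
    using card_mapsto_mult_le[OF assms(1,2) False] by (simp only: of_nat_le_iff)
  then have "(real n - 1) * card {\<psi>\<in>Q. \<psi> a = b} \<le> card Q"
    using assms(3) by (simp add: of_nat_diff)
  then have "real (card {\<psi>\<in>Q. \<psi> a = b}) \<le> card Q / (real n - 1)"
    using assms(3) by (simp add: field_simps)
  moreover have "0 \<le> (\<Sum>\<psi>\<in>Q. real (num_fixed n \<psi>)) / n"
    by (simp add: sum_nonneg)
  ultimately show ?thesis
    by linarith
qed

context
  fixes \<tau> :: "nat list"
  assumes \<tau>_distinct: "distinct \<tau>" and \<tau>_subset: "set \<tau> \<subseteq> {1..n}"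
begin

lemma distinct_positions:
  assumes "\<psi> \<in> Q"
  shows "distinct (map (inv \<psi>) \<tau>)"
proof -
  have "inj (inv \<psi>)"
    by (rule permutes_inj[OF permutes_inv[OF permutes[OF assms]]])
  then show ?thesis
    using \<tau>_distinct by (simp add: distinct_map inj_on_subset[OF _ subset_UNIV])
qed

lemma positions_subset:
  assumes "\<psi> \<in> Q"
  shows "inv \<psi> ` set \<tau> \<subseteq> {1..n}"
proof -
  have "inv \<psi> ` set \<tau> \<subseteq> inv \<psi> ` {1..n}"
    by (rule image_mono[OF \<tau>_subset])
  then show ?thesis
    by (simp only: permutes_image[OF permutes_inv[OF permutes[OF assms]]])
qed

lemma card_positions_le:
  assumes "distinct xs" "distinct ys" "set xs = set ys"
    and "set xs \<subseteq> {1..n}" "set xs \<inter> set \<tau> = {}"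
  shows "card {\<psi>\<in>Q. map (inv \<psi>) \<tau> = xs} \<le> card {\<psi>\<in>Q. map (inv \<psi>) \<tau> = ys}"
proof -
  obtain \<sigma> where \<sigma>: "\<sigma> permutes set xs" "map \<sigma> xs = ys"
    using obtain_permutes_map_eq[OF assms(1-3)] .
  have \<sigma>_perm: "\<sigma> permutes {1..n}"
    using permutes_subset[OF \<sigma>(1) assms(4)] .
  txt \<open>\<open>\<sigma>\<close> moves only positions, none of which is a letter of \<open>\<tau>\<close>.\<close>
  have fixes_\<tau>: "map (inv \<sigma>) \<tau> = \<tau>"
    using permutes_not_in[OF permutes_inv[OF \<sigma>(1)]] assms(5) by (auto intro: map_idI)
  show ?thesis
  proof (rule card_le_card_conj[OF \<sigma>_perm])
    fix \<psi> assume "\<psi> \<in> Q" "map (inv \<psi>) \<tau> = xs"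
    have "map (inv (\<sigma> \<circ> \<psi> \<circ> inv \<sigma>)) \<tau> = map \<sigma> (map (inv \<psi>) (map (inv \<sigma>) \<tau>))"
      using inv_conjugate[OF permutes_bij[OF \<sigma>_perm] permutes_bij[OF permutes[OF \<open>\<psi> \<in> Q\<close>]]]
      by simp
    then show "map (inv (\<sigma> \<circ> \<psi> \<circ> inv \<sigma>)) \<tau> = ys"
      using fixes_\<tau> \<sigma>(2) \<open>map (inv \<psi>) \<tau> = xs\<close> by simp
  qed
qed

lemma card_disjoint_positions:
  "card {\<psi>\<in>Q. inv \<psi> ` set \<tau> \<inter> set \<tau> = {}} =
     fact (length \<tau>) * card {\<psi>\<in>Q. inv \<psi> ` set \<tau> \<inter> set \<tau> = {} \<and> sorted_wrt (<) (map (inv \<psi>) \<tau>)}"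
proof -
  let ?A = "{\<psi>\<in>Q. inv \<psi> ` set \<tau> \<inter> set \<tau> = {}}"
  have "card ?A = fact (length \<tau>) * card {\<psi>\<in>?A. sorted_wrt (<) (map (inv \<psi>) \<tau>)}"
  proof (rule card_eq_fact_mult_card_sorted)
    show "finite ?A"
      using finite_Q by simp
    show "\<And>\<psi>. \<psi> \<in> ?A \<Longrightarrow> distinct (map (inv \<psi>) \<tau>)"
      using distinct_positions by simp
    show "\<And>\<psi>. \<psi> \<in> ?A \<Longrightarrow> length (map (inv \<psi>) \<tau>) = length \<tau>"
      by simp
    fix \<psi> ys
    assume \<psi>: "\<psi> \<in> ?A" and ys: "distinct ys" "set ys = set (map (inv \<psi>) \<tau>)"
    have restrict: "{\<phi>\<in>?A. map (inv \<phi>) \<tau> = zs} = {\<phi>\<in>Q. map (inv \<phi>) \<tau> = zs}"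
      if zs: "set zs = set (map (inv \<psi>) \<tau>)" for zs
    proof -
      have "inv \<phi> ` set \<tau> \<inter> set \<tau> = {}" if "map (inv \<phi>) \<tau> = zs" for \<phi>
      proof -
        have "inv \<phi> ` set \<tau> = inv \<psi> ` set \<tau>"
          using arg_cong[OF that, of set] zs by simp
        then show ?thesis
          using \<psi> by simp
      qed
      then show ?thesis
        by auto
    qed
    show "card {\<phi>\<in>?A. map (inv \<phi>) \<tau> = ys} = card {\<phi>\<in>?A. map (inv \<phi>) \<tau> = map (inv \<psi>) \<tau>}"
      unfolding restrict[OF ys(2)] restrict[OF refl]
      using \<psi> ys distinct_positions positions_subset
      by (intro antisym card_positions_le) auto
  qed
  then show ?thesis
    by (simp add: conj_assoc)
qed

lemma card_meeting_positions_bound: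
  assumes "n \<ge> 2"
  shows "real (card {\<psi>\<in>Q. inv \<psi> ` set \<tau> \<inter> set \<tau> \<noteq> {}}) \<le>
           (length \<tau>)\<^sup>2 * ((\<Sum>\<psi>\<in>Q. real (num_fixed n \<psi>)) / n + card Q / (real n - 1))"
proof -
  let ?B = "(\<Sum>\<psi>\<in>Q. real (num_fixed n \<psi>)) / n + card Q / (real n - 1)"
  have "{\<psi>\<in>Q. inv \<psi> ` set \<tau> \<inter> set \<tau> \<noteq> {}} \<subseteq> (\<Union>a\<in>set \<tau>. \<Union>b\<in>set \<tau>. {\<psi>\<in>Q. \<psi> a = b})"
    using permutes_inverses(1)[OF permutes] by fastforce
  then have "card {\<psi>\<in>Q. inv \<psi> ` set \<tau> \<inter> set \<tau> \<noteq> {}} \<le> card (\<Union>a\<in>set \<tau>. \<Union>b\<in>set \<tau>. {\<psi>\<in>Q. \<psi> a = b})"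
    using finite_Q by (intro card_mono) auto
  also have "\<dots> \<le> (\<Sum>a\<in>set \<tau>. \<Sum>b\<in>set \<tau>. card {\<psi>\<in>Q. \<psi> a = b})"
    by (intro order.trans[OF card_UN_le] sum_mono card_UN_le) auto
  finally have "real (card {\<psi>\<in>Q. inv \<psi> ` set \<tau> \<inter> set \<tau> \<noteq> {}}) \<le>
      (\<Sum>a\<in>set \<tau>. \<Sum>b\<in>set \<tau>. real (card {\<psi>\<in>Q. \<psi> a = b}))"
    by (simp only: of_nat_le_iff of_nat_sum[symmetric])
  also have "\<dots> \<le> (\<Sum>a\<in>set \<tau>. \<Sum>b\<in>set \<tau>. ?B)"
    using \<tau>_subset assms by (intro sum_mono card_mapsto_bound) auto
  also have "\<dots> = (length \<tau>)\<^sup>2 * ?B"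
    using \<tau>_distinct by (simp add: distinct_card power2_eq_square)
  finally show ?thesis .
qed

lemma card_has_subseq_deviation:
  assumes "n \<ge> 2" "Q \<noteq> {}"
  shows "\<bar>card {\<psi>\<in>Q. has_subseq n \<psi> \<tau>} / card Q - 1 / fact (length \<tau>)\<bar> \<le>
           (length \<tau>)\<^sup>2 * ((\<Sum>\<psi>\<in>Q. real (num_fixed n \<psi>)) / card Q / n + 1 / (real n - 1))"
proof -
  define D where "D = {\<psi>\<in>Q. inv \<psi> ` set \<tau> \<inter> set \<tau> = {}}"
  define M where "M = {\<psi>\<in>Q. inv \<psi> ` set \<tau> \<inter> set \<tau> \<noteq> {}}"
  define I where "I = {\<psi>\<in>Q. inv \<psi> ` set \<tau> \<inter> set \<tau> = {} \<and> sorted_wrt (<) (map (inv \<psi>) \<tau>)}"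
  have finite: "finite D" "finite M" "finite I"
    using finite_Q by (simp_all add: D_def M_def I_def)
  have "{\<psi>\<in>Q. has_subseq n \<psi> \<tau>} = I \<union> {\<psi>\<in>M. has_subseq n \<psi> \<tau>}"
    using has_subseq_iff_sorted_positions[OF permutes \<tau>_subset] by (auto simp: I_def M_def)
  moreover have "card (I \<union> {\<psi>\<in>M. has_subseq n \<psi> \<tau>}) = card I + card {\<psi>\<in>M. has_subseq n \<psi> \<tau>}"
    using finite_Q by (intro card_Un_disjoint) (auto simp: I_def M_def)
  ultimately have card_subseq:
    "card {\<psi>\<in>Q. has_subseq n \<psi> \<tau>} = card I + card {\<psi>\<in>M. has_subseq n \<psi> \<tau>}"
    by simp
  have "Q = D \<union> M"
    by (auto simp: D_def M_def)
  moreover have "card (D \<union> M) = card D + card M"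
    using finite by (intro card_Un_disjoint) (auto simp: D_def M_def)
  ultimately have "card Q = fact (length \<tau>) * card I + card M"
    using card_disjoint_positions by (simp add: D_def I_def)
  then have card_Q: "real (card Q) = fact (length \<tau>) * real (card I) + real (card M)"
    by (metis of_nat_add of_nat_fact of_nat_mult)
  have "card Q > 0"
    using assms(2) finite_Q by (simp add: card_gt_0_iff)
  moreover have "card {\<psi>\<in>M. has_subseq n \<psi> \<tau>} \<le> card M"
    using finite by (intro card_mono) auto
  ultimately have "\<bar>card {\<psi>\<in>Q. has_subseq n \<psi> \<tau>} / card Q - 1 / fact (length \<tau>)\<bar> \<le> card M / card Q"
    unfolding card_subseq of_nat_add
    by (intro abs_ratio_minus_inverse_le[OF _ _ _ card_Q]) auto
  also have "\<dots> \<le> (length \<tau>)\<^sup>2 * ((\<Sum>\<psi>\<in>Q. real (num_fixed n \<psi>)) / n + card Q / (real n - 1)) / card Q"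
    using card_meeting_positions_bound[OF assms(1)] \<open>card Q > 0\<close>
    by (simp add: M_def divide_right_mono)
  also have "\<dots> = (length \<tau>)\<^sup>2 * ((\<Sum>\<psi>\<in>Q. real (num_fixed n \<psi>)) / card Q / n + 1 / (real n - 1))"
    using \<open>card Q > 0\<close> by (simp add: field_simps)
  finally show ?thesis .
qed

end

end

lemma obtain_inverse_minus_one_le:
  fixes \<delta> :: real
  assumes "\<delta> > 0"
  obtains N :: nat where "\<And>n. n \<ge> N \<Longrightarrow> n \<ge> 2 \<and> 1 / (real n - 1) \<le> \<delta>"
proof -
  obtain N :: nat where N: "1 / \<delta> + 2 \<le> N"
    using real_arch_simple by blast
  have "n \<ge> 2 \<and> 1 / (real n - 1) \<le> \<delta>" if "n \<ge> N" for n
  proof -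
    have "1 / \<delta> + 1 \<le> real n - 1" "1 / \<delta> > 0"
      using N that of_nat_le_iff[of N n] \<open>\<delta> > 0\<close> by simp_all
    then have "n \<ge> 2"
      by linarith
    have "1 \<le> (real n - 1) * \<delta>"
      using \<open>1 / \<delta> + 1 \<le> real n - 1\<close> divide_le_eq[of 1 \<delta> "real n - 1"] \<open>\<delta> > 0\<close> by simp
    then show ?thesis
      using divide_le_eq[of 1 "real n - 1" \<delta>] \<open>n \<ge> 2\<close> by (simp add: mult.commute)
  qed
  then show ?thesis
    by (rule that)
qed

lemma ptilde_deviation_le:
  assumes "P n \<subseteq> {\<phi>. \<phi> permutes {1..n}}"
    and "\<And>\<phi> \<sigma>. \<phi> \<in> P n \<Longrightarrow> \<sigma> permutes {1..n} \<Longrightarrow> \<sigma> \<circ> \<phi> \<circ> inv \<sigma> \<in> P n"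
    and "n \<ge> 2" "P n \<noteq> {}" "distinct \<tau>" "set \<tau> \<subseteq> {1..n}"
  shows "\<bar>ptilde P n \<tau> - 1 / fact (length \<tau>)\<bar> \<le>
           (length \<tau>)\<^sup>2 * (avg_fixed P n / n + 1 / (real n - 1))"
proof -
  interpret conj_closed_perms "P n" n
    using assms(1,2) by unfold_locales auto
  show ?thesis
    using card_has_subseq_deviation[OF assms(5,6,3,4)]
    by (simp add: ptilde_def h_def avg_fixed_def)
qed

theorem theorem2:
  fixes P :: "nat \<Rightarrow> (nat \<Rightarrow> nat) set"
  assumes sub: "\<And>n. P n \<subseteq> {\<phi>. \<phi> permutes {1..n}}"
    and inf: "infinite {n. P n \<noteq> {}}"
    and conj: "\<And>n \<phi> \<sigma>. \<phi> \<in> P n \<Longrightarrow> \<sigma> permutes {1..n} \<Longrightarrow> \<sigma> \<circ> \<phi> \<circ> inv \<sigma> \<in> P n"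
    and fix_small: "\<forall>\<epsilon>>0. \<exists>N. \<forall>n\<ge>N. P n \<noteq> {} \<longrightarrow> avg_fixed P n \<le> \<epsilon> * real n"
    and k: "k \<ge> 1"
  shows "\<forall>\<epsilon>>0. \<exists>N. \<forall>n\<ge>N. P n \<noteq> {} \<longrightarrow>
           (\<forall>\<tau>. length \<tau> = k \<and> distinct \<tau> \<and> set \<tau> \<subseteq> {1..n} \<longrightarrow>
              \<bar>ptilde P n \<tau> - 1 / fact k\<bar> \<le> \<epsilon>)"
proof (intro allI impI)
  fix \<epsilon> :: real
  assume "\<epsilon> > 0"
  define \<delta> where "\<delta> = \<epsilon> / (2 * (real k)\<^sup>2)"
  have "\<delta> > 0"
    using \<open>\<epsilon> > 0\<close> k by (simp add: \<delta>_def)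
  obtain N1 where N1: "\<forall>n\<ge>N1. P n \<noteq> {} \<longrightarrow> avg_fixed P n \<le> \<delta> * real n"
    using fix_small \<open>\<delta> > 0\<close> by blast
  obtain N2 where N2: "\<And>n. n \<ge> N2 \<Longrightarrow> n \<ge> 2 \<and> 1 / (real n - 1) \<le> \<delta>"
    using obtain_inverse_minus_one_le[OF \<open>\<delta> > 0\<close>] by blast
  show "\<exists>N. \<forall>n\<ge>N. P n \<noteq> {} \<longrightarrow>
          (\<forall>\<tau>. length \<tau> = k \<and> distinct \<tau> \<and> set \<tau> \<subseteq> {1..n} \<longrightarrow> \<bar>ptilde P n \<tau> - 1 / fact k\<bar> \<le> \<epsilon>)"
  proof (intro exI[of _ "max N1 N2"] allI impI, elim conjE)
    fix n \<tau>
    assume n: "max N1 N2 \<le> n" and "P n \<noteq> {}" and \<tau>: "length \<tau> = k" "distinct \<tau>" "set \<tau> \<subseteq> {1..n}"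
    have "n \<ge> 2" "1 / (real n - 1) \<le> \<delta>"
      using N2 n by auto
    have "avg_fixed P n / n \<le> \<delta>"
      using N1 n \<open>P n \<noteq> {}\<close> \<open>n \<ge> 2\<close> by (simp add: divide_le_eq)
    have "\<bar>ptilde P n \<tau> - 1 / fact k\<bar> \<le> (real k)\<^sup>2 * (avg_fixed P n / n + 1 / (real n - 1))"
      using ptilde_deviation_le[of P n, OF sub conj \<open>n \<ge> 2\<close> \<open>P n \<noteq> {}\<close> \<tau>(2,3)] \<tau>(1) by simp
    also have "\<dots> \<le> (real k)\<^sup>2 * (\<delta> + \<delta>)"
      using \<open>avg_fixed P n / n \<le> \<delta>\<close> \<open>1 / (real n - 1) \<le> \<delta>\<close> by (intro mult_left_mono add_mono) auto
    also have "\<dots> = \<epsilon>"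
      using k by (simp add: \<delta>_def)
    finally show "\<bar>ptilde P n \<tau> - 1 / fact k\<bar> \<le> \<epsilon>" .
  qed
qed

end
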